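(* Let $D$ be an integral domain and $\star$ a semistar operation on $D$. The following are equivalent: (i) for every overring $T$ of $D$ and every semistar operation $\star'$ on $T$, $T$ is $(\star,\star')$-linked to $D$; (ii) every overring $T$ of $D$ is $(\star,d_T)$-linked to $D$; (iii) every overring $T$ of $D$ is $t$-linked to $(D,\star)$; (iv) for every valuation overring $V$ of $D$ there is a semistar operation $\ast_V$ on $V$ with $V^{\ast_V}=V$ such that $V$ is $(\star,\ast_V)$-linked to $D$; (v) every maximal ideal of $D$ is a quasi-$\star_f$-maximal ideal; (vi) for every proper ideal $I$ of $D$, $I^{\star_f}\subsetneq D^\star$; (vii) for every proper finitely generated ideal $I$ of $D$, $I^\star\subsetneq D^\star$; (viii) for every proper $\star_f$-invertible ideal $I$ of $D$ (i.e. $(II^{-1})^{\star_f}=D^\star$, where $I^{-1}=(D:_KI)$), $I^{\star_f}\subsetneq D^\star$.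
   Context: Let $D$ be an integral domain with quotient field $K$. $\overline{\mathbf F}(D)$ denotes the set of all nonzero $D$-submodules of $K$ and $\mathbf f(D)$ the set of nonzero finitely generated $D$-submodules of $K$. A semistar operation on $D$ is a map $\star:\overline{\mathbf F}(D)\to\overline{\mathbf F}(D)$, $E\mapsto E^\star$, such that for all $0\ne x\in K$ and $E,F\in\overline{\mathbf F}(D)$: (1) $(xE)^\star=xE^\star$; (2) $E\subseteq F\Rightarrow E^\star\subseteq F^\star$; (3) $E\subseteq E^\star$ and $(E^\star)^\star=E^\star$. $\star_f$ is defined by $E^{\star_f}=\bigcup\{F^\star:F\in\mathbf f(D),F\subseteq E\}$. A nonzero ideal $I$ of $D$ is a quasi-$\star$-ideal if $I^\star\cap D=I$; a quasi-$\star$-maximal ideal is a maximal element among proper quasi-$\star$-ideals. An overring of $D$ is a ring $T$ with $D\subseteq T\subseteq K$; semistar operations on $T$ are defined likewise. $d_T$ denotes the identity operation on $T$; $v_T$ is $E\mapsto(T:_K(T:_KE))$ and $t_T:=(v_T)_f$. If $\star'$ is a semistar operation on $T$, $T$ is $(\star,\star')$-linked to $D$ if for every nonzero finitely generated ideal $F\subseteq D$ with $F^\star=D^\star$ one has $(FT)^{\star'}=T^{\star'}$; $T$ is $t$-linked to $(D,\star)$ if it is $(\star,t_T)$-linked to $D$. *)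

theory Defs
  imports Main
begin

text \<open>We work inside a field K (the type 'a). Rings D, T are subsets of K.\<close>

definition subring :: "'a::field set \<Rightarrow> bool" where
  "subring R \<longleftrightarrow> 0 \<in> R \<and> 1 \<in> R \<and> (\<forall>x\<in>R. \<forall>y\<in>R. x + y \<in> R \<and> x - y \<in> R \<and> x * y \<in> R)"

definition quotient_field_is_UNIV :: "'a::field set \<Rightarrow> bool" where
  "quotient_field_is_UNIV D \<longleftrightarrow> (\<forall>x. \<exists>a\<in>D. \<exists>b\<in>D. b \<noteq> 0 \<and> x = a / b)"

definition overring :: "'a::field set \<Rightarrow> 'a set \<Rightarrow> bool" where
  "overring D T \<longleftrightarrow> subring T \<and> D \<subseteq> T"

definition valuation_overring :: "'a::field set \<Rightarrow> 'a set \<Rightarrow> bool" where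
  "valuation_overring D V \<longleftrightarrow> overring D V \<and> (\<forall>x. x \<noteq> 0 \<longrightarrow> x \<in> V \<or> inverse x \<in> V)"

definition submod :: "'a::field set \<Rightarrow> 'a set \<Rightarrow> bool" where
  "submod R E \<longleftrightarrow> 0 \<in> E \<and> (\<forall>x\<in>E. \<forall>y\<in>E. x + y \<in> E) \<and> (\<forall>r\<in>R. \<forall>x\<in>E. r * x \<in> E)"

definition nzsub :: "'a::field set \<Rightarrow> 'a set \<Rightarrow> bool" where
  "nzsub R E \<longleftrightarrow> submod R E \<and> E \<noteq> {0}"

definition rspan :: "'a::field set \<Rightarrow> 'a set \<Rightarrow> 'a set" where
  "rspan R S = {x. \<exists>A c. finite A \<and> A \<subseteq> S \<and> (\<forall>a\<in>A. c a \<in> R) \<and> x = (\<Sum>a\<in>A. c a * a)}"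

definition fgsub :: "'a::field set \<Rightarrow> 'a set \<Rightarrow> bool" where
  "fgsub R F \<longleftrightarrow> (\<exists>A. finite A \<and> F = rspan R A) \<and> F \<noteq> {0}"

definition mprod :: "'a::field set \<Rightarrow> 'a set \<Rightarrow> 'a set \<Rightarrow> 'a set" where
  "mprod R E F = rspan R {e * f | e f. e \<in> E \<and> f \<in> F}"

definition colon :: "'a::field set \<Rightarrow> 'a set \<Rightarrow> 'a set" where
  "colon R E = {x. \<forall>e\<in>E. x * e \<in> R}"

definition semistar :: "'a::field set \<Rightarrow> ('a set \<Rightarrow> 'a set) \<Rightarrow> bool" where
  "semistar R st \<longleftrightarrow>
     (\<forall>E. nzsub R E \<longrightarrow> nzsub R (st E)) \<and>
     (\<forall>E x. nzsub R E \<longrightarrow> x \<noteq> 0 \<longrightarrow> st ((\<lambda>e. x * e) ` E) = (\<lambda>e. x * e) ` st E) \<and>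
     (\<forall>E F. nzsub R E \<longrightarrow> nzsub R F \<longrightarrow> E \<subseteq> F \<longrightarrow> st E \<subseteq> st F) \<and>
     (\<forall>E. nzsub R E \<longrightarrow> E \<subseteq> st E \<and> st (st E) = st E)"

definition star_f :: "'a::field set \<Rightarrow> ('a set \<Rightarrow> 'a set) \<Rightarrow> 'a set \<Rightarrow> 'a set" where
  "star_f R st E = \<Union>{st F | F. fgsub R F \<and> F \<subseteq> E}"

definition v_op :: "'a::field set \<Rightarrow> 'a set \<Rightarrow> 'a set" where
  "v_op T E = colon T (colon T E)"

definition t_op :: "'a::field set \<Rightarrow> 'a set \<Rightarrow> 'a set" where
  "t_op T = star_f T (v_op T)"

definition d_op :: "'a::field set \<Rightarrow> 'a set \<Rightarrow> 'a set" where
  "d_op T E = E"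

definition ideal_of :: "'a::field set \<Rightarrow> 'a set \<Rightarrow> bool" where
  "ideal_of D I \<longleftrightarrow> I \<subseteq> D \<and> submod D I"

definition maximal_ideal :: "'a::field set \<Rightarrow> 'a set \<Rightarrow> bool" where
  "maximal_ideal D M \<longleftrightarrow> ideal_of D M \<and> M \<noteq> D \<and>
     (\<forall>J. ideal_of D J \<longrightarrow> M \<subseteq> J \<longrightarrow> J = M \<or> J = D)"

definition quasi_ideal :: "'a::field set \<Rightarrow> ('a set \<Rightarrow> 'a set) \<Rightarrow> 'a set \<Rightarrow> bool" where
  "quasi_ideal D st I \<longleftrightarrow> ideal_of D I \<and> I \<noteq> {0} \<and> st I \<inter> D = I"

definition quasi_maximal :: "'a::field set \<Rightarrow> ('a set \<Rightarrow> 'a set) \<Rightarrow> 'a set \<Rightarrow> bool" where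
  "quasi_maximal D st M \<longleftrightarrow> quasi_ideal D st M \<and> M \<noteq> D \<and>
     (\<forall>J. quasi_ideal D st J \<longrightarrow> J \<noteq> D \<longrightarrow> M \<subseteq> J \<longrightarrow> J = M)"

definition linked :: "'a::field set \<Rightarrow> ('a set \<Rightarrow> 'a set) \<Rightarrow> 'a set \<Rightarrow> ('a set \<Rightarrow> 'a set) \<Rightarrow> bool" where
  "linked D st T st' \<longleftrightarrow>
     (\<forall>F. fgsub D F \<longrightarrow> F \<subseteq> D \<longrightarrow> st F = st D \<longrightarrow> st' (rspan T F) = st' T)"

definition tfae :: "bool list \<Rightarrow> bool" where
  "tfae ps \<longleftrightarrow> (\<forall>i<length ps. \<forall>j<length ps. ps ! i = ps ! j)"

end

theory Submission
  imports Defs "HOL-Computational_Algebra.Polynomial"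
begin

text \<open>All eight conditions are equivalent to (vii) in the form: a finitely generated ideal \<open>I\<close>
  with \<open>I\<^sup>\<star> = D\<^sup>\<star>\<close> is \<open>D\<close> itself. Assuming it, every ideal \<open>F\<close> in the definition of linkedness
  is \<open>D\<close>, giving (i)--(iv); and \<open>1 \<in> I\<^sup>\<star>\<^sup>f\<close> would produce a finitely generated \<open>G \<subseteq> I\<close> with
  \<open>G\<^sup>\<star> = D\<^sup>\<star>\<close>, giving (vi), (viii) and, since \<open>M + D x = D\<close> for \<open>x \<notin> M\<close>, also (v). Conversely, a
  proper such \<open>I\<close> refutes (ii) with \<open>T = D\<close> and (v)--(viii) through a maximal ideal above \<open>I\<close>.
  For (iii) and (iv) one needs a valuation overring \<open>V\<close> with \<open>I V \<noteq> V\<close>: by Zorn's lemma some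
  overring \<open>V\<close> is maximal with \<open>1 \<notin> I V\<close>, and lowering degrees in relations \<open>1 = q(x) = r(1/x)\<close>
  with coefficients in \<open>I V\<close> shows that \<open>V\<close> is a valuation ring. There \<open>I V = g V\<close> is principal,
  hence fixed by \<open>t\<^sub>V\<close> and by every \<open>\<star>'\<close> with \<open>V\<^sup>\<star>\<^sup>' = V\<close>, contradicting linkedness.\<close>

section \<open>Subrings, submodules and spans inside a field\<close>

lemma subringD:
  assumes "subring R"
  shows "0 \<in> R" "1 \<in> R" "x \<in> R \<Longrightarrow> y \<in> R \<Longrightarrow> x + y \<in> R"
    "x \<in> R \<Longrightarrow> y \<in> R \<Longrightarrow> x - y \<in> R" "x \<in> R \<Longrightarrow> y \<in> R \<Longrightarrow> x * y \<in> R"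
  using assms unfolding subring_def by auto

lemma subring_sum: "subring R \<Longrightarrow> (\<And>i. i \<in> S \<Longrightarrow> f i \<in> R) \<Longrightarrow> sum f S \<in> R"
  by (induction S rule: infinite_finite_induct) (auto simp: subringD)

lemma subring_power: "subring R \<Longrightarrow> x \<in> R \<Longrightarrow> x ^ n \<in> R"
  by (induction n) (auto simp: subringD)

lemma subring_Union_chain:
  assumes "C \<noteq> {}" "subset.chain {R. subring R} C"
  shows "subring (\<Union>C)"
  unfolding subring_def
proof (intro conjI ballI)
  have rings: "\<And>R. R \<in> C \<Longrightarrow> subring R"
    using assms(2) unfolding subset_chain_def by blast
  then show "0 \<in> \<Union>C" "1 \<in> \<Union>C"
    using assms(1) subringD(1,2) by blast+
  fix x y assume "x \<in> \<Union>C" "y \<in> \<Union>C"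
  then obtain R where R: "R \<in> C" "x \<in> R" "y \<in> R"
    using assms(2) unfolding subset_chain_def by blast
  then show "x + y \<in> \<Union>C" "x - y \<in> \<Union>C" "x * y \<in> \<Union>C"
    using subringD(3-5)[OF rings[OF R(1)]] by blast+
qed

lemma submodD:
  assumes "submod R E"
  shows "0 \<in> E" "x \<in> E \<Longrightarrow> y \<in> E \<Longrightarrow> x + y \<in> E" "r \<in> R \<Longrightarrow> x \<in> E \<Longrightarrow> r * x \<in> E"
  using assms unfolding submod_def by auto

lemma submod_sum: "submod R E \<Longrightarrow> (\<And>i. i \<in> S \<Longrightarrow> f i \<in> E) \<Longrightarrow> sum f S \<in> E"
  by (induction S rule: infinite_finite_induct) (auto simp: submodD)

lemma submod_diff:
  assumes "subring R" "submod R E" "x \<in> E" "y \<in> E"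
  shows "x - y \<in> E"
proof -
  have "0 - 1 \<in> R"
    using subringD[OF assms(1)] by blast
  then have "x + (0 - 1) * y \<in> E"
    using assms(3,4) submodD[OF assms(2)] by blast
  then show ?thesis by simp
qed

lemma submod_power_diff:
  assumes R: "subring R" and E: "submod R E" and ab: "a \<in> R" "b \<in> R" "a - b \<in> E"
  shows "a ^ k - b ^ k \<in> E"
proof (induction k)
  case 0
  then show ?case using submodD(1)[OF E] by simp
next
  case (Suc k)
  have "a ^ Suc k - b ^ Suc k = a * (a ^ k - b ^ k) + b ^ k * (a - b)"
    by (simp add: algebra_simps)
  then show ?case
    using Suc ab by (simp add: submodD[OF E] subring_power[OF R])
qed

lemma submod_ring: "subring R \<Longrightarrow> submod R R"
  unfolding submod_def by (auto simp: subringD)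

lemma nzsub_ring: "subring R \<Longrightarrow> nzsub R R"
  unfolding nzsub_def using submod_ring subringD(2)[of R] by force

lemma submod_principal:
  assumes R: "subring R"
  shows "submod R ((\<lambda>e. g * e) ` R)"
  unfolding submod_def
proof (intro conjI ballI)
  show "0 \<in> (\<lambda>e. g * e) ` R"
    using subringD(1)[OF R] by (intro image_eqI[of _ _ 0]) simp_all
  fix x y assume "x \<in> (\<lambda>e. g * e) ` R" "y \<in> (\<lambda>e. g * e) ` R"
  then obtain a b where "a \<in> R" "b \<in> R" "x = g * a" "y = g * b" by blast
  then show "x + y \<in> (\<lambda>e. g * e) ` R"
    using subringD(3)[OF R] by (intro image_eqI[of _ _ "a + b"]) (simp_all add: distrib_left)
next
  fix r x assume "r \<in> R" "x \<in> (\<lambda>e. g * e) ` R"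
  then obtain a where "r \<in> R" "a \<in> R" "x = g * a" by blast
  then show "r * x \<in> (\<lambda>e. g * e) ` R"
    using subringD(5)[OF R] by (intro image_eqI[of _ _ "r * a"]) (simp_all add: mult.left_commute)
qed

lemma rspanE:
  assumes "x \<in> rspan R S"
  obtains A c where "finite A" "A \<subseteq> S" "\<forall>a\<in>A. c a \<in> R" "x = (\<Sum>a\<in>A. c a * a)"
  using assms unfolding rspan_def mem_Collect_eq by (elim exE conjE) (rule that)

lemma rspan_mult: "r \<in> R \<Longrightarrow> s \<in> S \<Longrightarrow> r * s \<in> rspan R S"
  unfolding rspan_def by (intro CollectI exI[of _ "{s}"] exI[of _ "\<lambda>_. r"]) auto

lemma rspan_superset: "1 \<in> R \<Longrightarrow> S \<subseteq> rspan R S"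
  using rspan_mult[of 1 R] by force

lemma rspan_mono: "R \<subseteq> R' \<Longrightarrow> S \<subseteq> S' \<Longrightarrow> rspan R S \<subseteq> rspan R' S'"
  unfolding rspan_def by (intro Collect_mono) (metis order.trans subsetD)

lemma zero_mem_rspan: "0 \<in> rspan R S"
  unfolding rspan_def by (intro CollectI exI[of _ "{}"]) auto

lemma rspan_add:
  assumes R: "subring R" and x: "x \<in> rspan R S" and y: "y \<in> rspan R S"
  shows "x + y \<in> rspan R S"
proof -
  obtain A c where A: "finite A" "A \<subseteq> S" "\<forall>a\<in>A. c a \<in> R" "x = (\<Sum>a\<in>A. c a * a)"
    using x by (rule rspanE)
  obtain B d where B: "finite B" "B \<subseteq> S" "\<forall>a\<in>B. d a \<in> R" "y = (\<Sum>a\<in>B. d a * a)"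
    using y by (rule rspanE)
  define e where "e a = (if a \<in> A then c a else 0) + (if a \<in> B then d a else 0)" for a
  have "(\<Sum>a\<in>A \<union> B. e a * a) =
      (\<Sum>a\<in>A \<union> B. if a \<in> A then c a * a else 0) + (\<Sum>a\<in>A \<union> B. if a \<in> B then d a * a else 0)"
    unfolding e_def
    by (simp add: distrib_right sum.distrib if_distrib[of "\<lambda>x. x * _"] cong: if_cong)
  also have "\<dots> = x + y"
    using A B by (simp add: sum.inter_restrict[symmetric] Int_absorb1)
  finally have "x + y = (\<Sum>a\<in>A \<union> B. e a * a)" ..
  moreover have "\<forall>a\<in>A \<union> B. e a \<in> R"
    using A(3) B(3) subringD[OF R] by (simp add: e_def)
  ultimately show ?thesis
    unfolding rspan_def mem_Collect_eq using A(1,2) B(1,2)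
    by (intro exI[of _ "A \<union> B"] exI[of _ e]) simp
qed

lemma rspan_scale:
  assumes R: "subring R" and r: "r \<in> R" and x: "x \<in> rspan R S"
  shows "r * x \<in> rspan R S"
proof -
  obtain A c where A: "finite A" "A \<subseteq> S" "\<forall>a\<in>A. c a \<in> R" "x = (\<Sum>a\<in>A. c a * a)"
    using x by (rule rspanE)
  then have "r * x = (\<Sum>a\<in>A. (r * c a) * a)"
    by (simp add: sum_distrib_left mult.assoc)
  moreover have "\<forall>a\<in>A. r * c a \<in> R"
    using A(3) r subringD(5)[OF R] by blast
  ultimately show ?thesis
    unfolding rspan_def mem_Collect_eq using A(1,2)
    by (intro exI[of _ A] exI[of _ "\<lambda>a. r * c a"]) simp
qed

lemma rspan_submod: "subring R \<Longrightarrow> submod R (rspan R S)"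
  unfolding submod_def using zero_mem_rspan rspan_add rspan_scale by blast

lemma rspan_least:
  assumes "submod R E" "S \<subseteq> E"
  shows "rspan R S \<subseteq> E"
proof
  fix x assume "x \<in> rspan R S"
  then obtain A c where A: "A \<subseteq> S" "\<forall>a\<in>A. c a \<in> R" and x: "x = (\<Sum>a\<in>A. c a * a)"
    by (rule rspanE)
  have "c a * a \<in> E" if "a \<in> A" for a
    using that A assms submodD(3)[OF assms(1)] by blast
  then show "x \<in> E"
    unfolding x by (rule submod_sum[OF assms(1)])
qed

lemma nonzero_generator_if_rspan_nonzero:
  assumes "rspan R A \<noteq> {0}"
  shows "\<exists>a\<in>A. a \<noteq> 0"
proof (rule ccontr)
  assume "\<not> (\<exists>a\<in>A. a \<noteq> 0)"
  then have "rspan R A \<subseteq> {0}"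
    by (intro rspan_least) (auto simp: submod_def)
  with zero_mem_rspan[of R A] assms show False
    by blast
qed

lemma rspan_idem: "subring R \<Longrightarrow> submod R E \<Longrightarrow> rspan R E = E"
  using rspan_least[of R E E] rspan_superset[of R E] subringD(2) by blast

lemma rspan_rspan:
  assumes "subring R" "subring R'" "R \<subseteq> R'"
  shows "rspan R' (rspan R S) = rspan R' S"
proof
  show "rspan R' (rspan R S) \<subseteq> rspan R' S"
    using assms by (intro rspan_least rspan_submod rspan_mono) auto
  show "rspan R' S \<subseteq> rspan R' (rspan R S)"
    using assms by (intro rspan_mono rspan_superset) (auto simp: subringD)
qed

lemma rspan_overring: "subring T \<Longrightarrow> D \<subseteq> T \<Longrightarrow> 1 \<in> D \<Longrightarrow> rspan T D = T"
  using rspan_least[OF submod_ring, of T D] rspan_mult[of _ T 1 D] by force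

lemma rspan_Union_chain:
  assumes "x \<in> rspan (\<Union>C) S" "C \<noteq> {}" "subset.chain \<R> C"
  obtains R where "R \<in> C" "x \<in> rspan R S"
proof -
  obtain A c where A: "finite A" "A \<subseteq> S" "\<forall>a\<in>A. c a \<in> \<Union>C" "x = (\<Sum>a\<in>A. c a * a)"
    using assms(1) by (rule rspanE)
  obtain R where R: "R \<in> C" "c ` A \<subseteq> R"
    using finite_subset_Union_chain[of "c ` A" C] A assms(2,3) by blast
  have "x \<in> rspan R S"
    unfolding rspan_def mem_Collect_eq using A(1,2,4) R(2)
    by (intro exI[of _ A] exI[of _ c]) auto
  with R(1) show thesis by (rule that)
qed

lemma fgsub_submod: "subring R \<Longrightarrow> fgsub R F \<Longrightarrow> submod R F"
  unfolding fgsub_def using rspan_submod by blast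

lemma fgsub_nzsub: "subring R \<Longrightarrow> fgsub R F \<Longrightarrow> nzsub R F"
  unfolding nzsub_def fgsub_def using rspan_submod by blast

lemma fgsub_rspan: "finite A \<Longrightarrow> rspan R A \<noteq> {0} \<Longrightarrow> fgsub R (rspan R A)"
  unfolding fgsub_def by blast

section \<open>Ideals and maximal ideals\<close>

lemma ideal_eq_if_one_mem: "ideal_of D I \<Longrightarrow> 1 \<in> I \<Longrightarrow> I = D"
  unfolding ideal_of_def submod_def by (metis mult.right_neutral subsetI subset_antisym)

lemma ideal_of_fgsub: "subring D \<Longrightarrow> fgsub D G \<Longrightarrow> G \<subseteq> D \<Longrightarrow> ideal_of D G"
  unfolding ideal_of_def using fgsub_submod by blast

lemma mprod_colon_subset:
  assumes D: "subring D"
  shows "mprod D I (colon D I) \<subseteq> D"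
proof -
  have "e * f \<in> D" if "e \<in> I" "f \<in> colon D I" for e f
    using that unfolding colon_def by (metis (no_types, lifting) mem_Collect_eq mult.commute)
  then show ?thesis
    unfolding mprod_def by (intro rspan_least[OF submod_ring[OF D]]) blast
qed

lemma subset_mprod_colon:
  assumes D: "subring D" and I: "I \<subseteq> D"
  shows "I \<subseteq> mprod D I (colon D I)"
proof
  fix e assume "e \<in> I"
  moreover have "1 \<in> colon D I"
    unfolding colon_def using I by auto
  ultimately have "e * 1 \<in> {e * f | e f. e \<in> I \<and> f \<in> colon D I}"
    by blast
  then show "e \<in> mprod D I (colon D I)"
    unfolding mprod_def using rspan_superset[OF subringD(2)[OF D]] by (simp add: subset_iff)
qed

lemma ideal_of_Union_chain:
  assumes "C \<noteq> {}" "subset.chain {J. ideal_of D J} C"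
  shows "ideal_of D (\<Union>C)"
proof -
  have ideals: "J \<subseteq> D" "submod D J" if "J \<in> C" for J
    using that assms(2) unfolding subset_chain_def ideal_of_def by blast+
  have "submod D (\<Union>C)"
    unfolding submod_def
  proof (intro conjI ballI)
    obtain J where "J \<in> C"
      using assms(1) by blast
    then show "0 \<in> \<Union>C"
      using submodD(1)[OF ideals(2)] by blast
  next
    fix x y assume "x \<in> \<Union>C" "y \<in> \<Union>C"
    then obtain J where "J \<in> C" "x \<in> J" "y \<in> J"
      using assms(2) unfolding subset_chain_def by blast
    then show "x + y \<in> \<Union>C"
      using submodD(2)[OF ideals(2)] by blast
  next
    fix r x assume "r \<in> D" "x \<in> \<Union>C"
    then obtain J where "J \<in> C" "x \<in> J"
      by blast
    then show "r * x \<in> \<Union>C"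
      using \<open>r \<in> D\<close> submodD(3)[OF ideals(2)] by blast
  qed
  then show ?thesis
    unfolding ideal_of_def using ideals(1) by blast
qed

lemma maximal_ideal_exists:
  assumes D: "subring D" and I: "ideal_of D I" "1 \<notin> I"
  obtains M where "maximal_ideal D M" "I \<subseteq> M"
proof -
  define S where "S = {J. ideal_of D J \<and> I \<subseteq> J \<and> 1 \<notin> J}"
  have "\<exists>M\<in>S. \<forall>J\<in>S. M \<subseteq> J \<longrightarrow> J = M"
  proof (rule subset_Zorn_nonempty)
    show "S \<noteq> {}"
      using I unfolding S_def by blast
  next
    fix C assume C: "C \<noteq> {}" "subset.chain S C"
    then have "subset.chain {J. ideal_of D J} C"
      unfolding S_def subset_chain_def by blast
    then have "ideal_of D (\<Union>C)"
      by (rule ideal_of_Union_chain[OF C(1)])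
    with C show "\<Union>C \<in> S"
      unfolding S_def subset_chain_def by blast
  qed
  then obtain M where M: "ideal_of D M" "I \<subseteq> M" "1 \<notin> M"
    and max: "\<And>J. ideal_of D J \<Longrightarrow> M \<subseteq> J \<Longrightarrow> 1 \<notin> J \<Longrightarrow> J = M"
    unfolding S_def by auto
  have "maximal_ideal D M"
    unfolding maximal_ideal_def
    using M max ideal_eq_if_one_mem subringD(2)[OF D] by blast
  then show thesis
    using M(2) by (rule that)
qed

lemma ideal_of_add_multiples:
  assumes D: "subring D" and M: "ideal_of D M" and x: "x \<in> D"
  shows "ideal_of D {m + d * x | m d. m \<in> M \<and> d \<in> D}" (is "ideal_of D ?J")
proof -
  have MD: "M \<subseteq> D" and Ms: "submod D M"
    using M unfolding ideal_of_def by auto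
  have "submod D ?J"
    unfolding submod_def
  proof (intro conjI ballI)
    show "0 \<in> ?J"
      using submodD(1)[OF Ms] subringD(1)[OF D] by force
    fix a b assume "a \<in> ?J" "b \<in> ?J"
    then obtain m1 d1 m2 d2 where "m1 \<in> M" "d1 \<in> D" "m2 \<in> M" "d2 \<in> D"
      and "a = m1 + d1 * x" "b = m2 + d2 * x"
      by blast
    moreover have "a + b = (m1 + m2) + (d1 + d2) * x"
      using calculation by (simp add: algebra_simps)
    ultimately show "a + b \<in> ?J"
      using submodD(2)[OF Ms] subringD(3)[OF D] by blast
  next
    fix r a assume "r \<in> D" "a \<in> ?J"
    then obtain m1 d1 where "m1 \<in> M" "d1 \<in> D" "a = m1 + d1 * x"
      by blast
    moreover have "r * a = r * m1 + (r * d1) * x"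
      using calculation by (simp add: algebra_simps)
    ultimately show "r * a \<in> ?J"
      using \<open>r \<in> D\<close> submodD(3)[OF Ms] subringD(5)[OF D] by blast
  qed
  moreover have "?J \<subseteq> D"
  proof
    fix a assume "a \<in> ?J"
    then obtain m d where "m \<in> M" "d \<in> D" "a = m + d * x"
      by blast
    then show "a \<in> D"
      using MD x by (simp add: subringD[OF D] subsetD)
  qed
  ultimately show ?thesis
    unfolding ideal_of_def by blast
qed

lemma maximal_ideal_comaximal:
  assumes D: "subring D" and M: "maximal_ideal D M" and x: "x \<in> D" "x \<notin> M"
  obtains m d where "m \<in> M" "d \<in> D" "1 = m + d * x"
proof -
  define J where "J = {m + d * x | m d. m \<in> M \<and> d \<in> D}"
  have Mi: "ideal_of D M"
    using M unfolding maximal_ideal_def by blast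
  have "M \<subseteq> J"
  proof
    fix m assume "m \<in> M"
    then have "m + 0 * x \<in> J"
      unfolding J_def using subringD(1)[OF D] by blast
    then show "m \<in> J" by simp
  qed
  moreover have "0 \<in> M"
    using Mi unfolding ideal_of_def submod_def by blast
  then have "0 + 1 * x \<in> J"
    unfolding J_def using subringD(2)[OF D] by blast
  moreover have "ideal_of D J"
    unfolding J_def by (rule ideal_of_add_multiples[OF D Mi x(1)])
  ultimately have "J = D"
    using M x(2) unfolding maximal_ideal_def by auto
  then have "1 \<in> J"
    using subringD(2)[OF D] by simp
  then show thesis
    using that unfolding J_def by blast
qed

lemma maximal_ideal_nonzero:
  assumes D: "subring D" "quotient_field_is_UNIV D" "D \<noteq> UNIV" and M: "maximal_ideal D M"
  shows "M \<noteq> {0}"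
proof
  assume M0: "M = {0}"
  have inverse_mem: "inverse d \<in> D" if d: "d \<in> D" "d \<noteq> 0" for d
  proof -
    have "d \<notin> M"
      using d(2) M0 by simp
    then obtain m r where "m \<in> M" "r \<in> D" "1 = m + r * d"
      by (rule maximal_ideal_comaximal[OF D(1) M d(1)])
    then have "d * r = 1" and "r \<in> D"
      using M0 by (simp_all add: mult.commute)
    then show ?thesis
      by (simp add: inverse_unique)
  qed
  have "x \<in> D" for x
  proof -
    obtain a b where ab: "a \<in> D" "b \<in> D" "b \<noteq> 0" "x = a / b"
      using D(2) unfolding quotient_field_is_UNIV_def by blast
    then show ?thesis
      using subringD(5)[OF D(1) ab(1) inverse_mem[OF ab(2,3)]] by (simp add: divide_inverse)
  qed
  then show False
    using D(3) by blast
qed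

section \<open>Valuation overrings\<close>

definition adjoin :: "'a::field set \<Rightarrow> 'a \<Rightarrow> 'a set" where
  "adjoin R z = {poly p z | p. \<forall>i. coeff p i \<in> R}"

lemma subring_adjoin:
  assumes R: "subring R"
  shows "subring (adjoin R z)"
  unfolding subring_def
proof (intro conjI ballI)
  show "0 \<in> adjoin R z"
    unfolding adjoin_def by (intro CollectI exI[of _ 0]) (simp add: subringD(1)[OF R])
  show "1 \<in> adjoin R z"
    unfolding adjoin_def by (intro CollectI exI[of _ 1]) (simp add: subringD(1,2)[OF R] coeff_1)
  fix x y assume "x \<in> adjoin R z" "y \<in> adjoin R z"
  then obtain p q where p: "\<forall>i. coeff p i \<in> R" "x = poly p z" and q: "\<forall>i. coeff q i \<in> R" "y = poly q z"
    unfolding adjoin_def by blast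
  show "x + y \<in> adjoin R z"
    unfolding adjoin_def by (intro CollectI exI[of _ "p + q"]) (simp add: p q subringD(3)[OF R])
  show "x - y \<in> adjoin R z"
    unfolding adjoin_def by (intro CollectI exI[of _ "p - q"]) (simp add: p q subringD(4)[OF R])
  have "\<forall>i. coeff (p * q) i \<in> R"
    unfolding coeff_mult by (intro allI subring_sum[OF R]) (simp add: p q subringD(5)[OF R])
  then show "x * y \<in> adjoin R z"
    unfolding adjoin_def by (intro CollectI exI[of _ "p * q"]) (simp add: p q)
qed

lemma subset_adjoin: "subring R \<Longrightarrow> R \<subseteq> adjoin R z"
  unfolding adjoin_def
  by (intro subsetI CollectI exI[of _ "[:_:]"]) (simp add: coeff_pCons subringD(1) split: nat.split)

lemma mem_adjoin: "subring R \<Longrightarrow> z \<in> adjoin R z"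
  unfolding adjoin_def
  by (intro CollectI exI[of _ "[:0, 1:]"]) (simp add: coeff_pCons subringD(1,2) split: nat.split)

lemma poly_mem_submod:
  assumes R: "subring R" and I: "submod R I" and q: "\<forall>i. coeff q i \<in> I" and y: "y \<in> R"
  shows "poly q y \<in> I"
proof -
  have "y ^ i * coeff q i \<in> I" for i
    using q subring_power[OF R y] by (simp add: submodD(3)[OF I])
  then show ?thesis
    unfolding poly_altdef by (intro submod_sum[OF I]) (simp add: mult.commute)
qed

lemma one_mem_rspan_adjoin:
  assumes R: "subring R" and one: "1 \<in> rspan (adjoin R z) A"
  obtains q where "\<forall>i. coeff q i \<in> rspan R A" "poly q z = 1"
proof -
  obtain B c where B: "finite B" "B \<subseteq> A" "\<forall>a\<in>B. c a \<in> adjoin R z" "1 = (\<Sum>a\<in>B. c a * a)"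
    using one by (rule rspanE)
  have "\<forall>a\<in>B. \<exists>p. (\<forall>i. coeff p i \<in> R) \<and> c a = poly p z"
    using B(3) unfolding adjoin_def by blast
  then obtain p where p: "\<And>a. a \<in> B \<Longrightarrow> \<forall>i. coeff (p a) i \<in> R"
    "\<And>a. a \<in> B \<Longrightarrow> c a = poly (p a) z"
    by (metis bchoice)
  define q where "q = (\<Sum>a\<in>B. smult a (p a))"
  have "poly q z = 1"
    unfolding q_def poly_sum B(4) by (rule sum.cong) (simp_all add: p(2) mult.commute)
  moreover have "coeff q i \<in> rspan R A" for i
  proof -
    have "coeff q i = (\<Sum>a\<in>B. coeff (p a) i * a)"
      unfolding q_def coeff_sum by (rule sum.cong) auto
    also have "\<dots> \<in> rspan R A"
      using B(2) p(1) by (intro submod_sum[OF rspan_submod[OF R]] rspan_mult) blast+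
    finally show ?thesis .
  qed
  ultimately show thesis
    using that by blast
qed

text \<open>The situation of a ring \<open>V\<close> maximal among the overrings \<open>R\<close> with \<open>1 \<notin> I R\<close>:
  adjoining any \<open>z \<notin> V\<close> forces \<open>1 \<in> I V[z]\<close>, i.e. \<open>1 = q(z)\<close> with coefficients of \<open>q\<close> in \<open>I\<close>.\<close>

locale ideal_avoiding_ring =
  fixes V :: "'a::field set" and I :: "'a set"
  assumes V: "subring V" and I: "submod V I" "I \<subseteq> V" and one_notin: "1 \<notin> I"
    and one_eval_outside: "z \<notin> V \<Longrightarrow> \<exists>q. (\<forall>i. coeff q i \<in> I) \<and> poly q z = 1"
begin

definition ideal_evals :: "'a \<Rightarrow> nat \<Rightarrow> 'a set" where
  "ideal_evals w k = {poly p w | p. (\<forall>i. coeff p i \<in> I) \<and> degree p \<le> k}"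

lemma ideal_evalsI: "\<forall>i. coeff p i \<in> I \<Longrightarrow> degree p \<le> k \<Longrightarrow> poly p w \<in> ideal_evals w k"
  unfolding ideal_evals_def by blast

lemma ideal_evalsE:
  assumes "y \<in> ideal_evals w k"
  obtains p where "\<forall>i. coeff p i \<in> I" "degree p \<le> k" "poly p w = y"
  using assms unfolding ideal_evals_def by blast

lemma ideal_evals_add:
  assumes "y \<in> ideal_evals w k" "y' \<in> ideal_evals w k"
  shows "y + y' \<in> ideal_evals w k"
proof -
  obtain p p' where p: "\<forall>i. coeff p i \<in> I" "degree p \<le> k" "poly p w = y"
    and p': "\<forall>i. coeff p' i \<in> I" "degree p' \<le> k" "poly p' w = y'"
    using assms by (meson ideal_evalsE)
  have "poly (p + p') w \<in> ideal_evals w k"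
    using p p' by (intro ideal_evalsI) (simp_all add: submodD(2)[OF I(1)] degree_add_le)
  then show ?thesis
    using p(3) p'(3) by simp
qed

lemma ideal_evals_mult:
  assumes v: "v \<in> V" and y: "y \<in> ideal_evals w k"
  shows "v * y \<in> ideal_evals w k"
proof -
  obtain p where p: "\<forall>i. coeff p i \<in> I" "degree p \<le> k" "poly p w = y"
    using y by (rule ideal_evalsE)
  have "poly (smult v p) w \<in> ideal_evals w k"
    using p v by (intro ideal_evalsI) (simp_all add: submodD(3)[OF I(1)])
  then show ?thesis
    using p(3) by simp
qed

lemma ideal_evals_power:
  assumes "y \<in> ideal_evals w k"
  shows "w ^ j * y \<in> ideal_evals w (k + j)"
proof (induction j)
  case 0
  then show ?case using assms by simp
next
  case (Suc j)
  obtain p where p: "\<forall>i. coeff p i \<in> I" "degree p \<le> k + j" "poly p w = w ^ j * y"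
    using Suc.IH by (rule ideal_evalsE)
  have "\<forall>i. coeff (pCons 0 p) i \<in> I"
    using p(1) submodD(1)[OF I(1)] by (simp add: coeff_pCons split: nat.split)
  moreover have "degree (pCons 0 p) \<le> k + Suc j"
    using p(2) by simp
  ultimately have "poly (pCons 0 p) w \<in> ideal_evals w (k + Suc j)"
    by (rule ideal_evalsI)
  then show ?case
    using p(3) by (simp add: mult.assoc)
qed

lemma ideal_evals_reflect:
  assumes p: "\<forall>i. coeff p i \<in> I" "degree p \<le> k" and w: "w \<noteq> 0"
  shows "w ^ k * poly p (inverse w) \<in> ideal_evals w k"
proof -
  have "\<forall>i. coeff (reflect_poly p) i \<in> I"
    using p(1) submodD(1)[OF I(1)] by (simp add: coeff_reflect_poly)
  then have "poly (reflect_poly p) w \<in> ideal_evals w (degree p)"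
    using degree_reflect_poly_le by (rule ideal_evalsI)
  then have "w ^ (k - degree p) * (w ^ degree p * poly p (inverse w)) \<in> ideal_evals w (degree p + (k - degree p))"
    unfolding poly_reflect_poly_nz[OF w] by (rule ideal_evals_power)
  then show ?thesis
    using p(2) by (simp add: mult.assoc[symmetric] power_add[symmetric])
qed

lemma ideal_evals_subset: "w \<in> V \<Longrightarrow> ideal_evals w k \<subseteq> I"
  using poly_mem_submod[OF V I(1)] unfolding ideal_evals_def by blast

lemma one_notin_ideal_evals_0: "1 \<notin> ideal_evals w 0"
proof
  assume "1 \<in> ideal_evals w 0"
  then obtain p where p: "\<forall>i. coeff p i \<in> I" "degree p \<le> 0" "poly p w = 1"
    by (rule ideal_evalsE)
  then have "[:coeff p 0:] = p"
    by (intro degree_0_id) simp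
  then have "poly [:coeff p 0:] w = 1"
    using p(3) by simp
  then have "coeff p 0 = 1"
    by simp
  then show False
    using p(1) one_notin by metis
qed

lemma ideal_evals_drop_top:
  assumes "y \<in> ideal_evals w n"
  obtains a where "a \<in> V" "y - a * w ^ n \<in> ideal_evals w (n - 1)"
proof -
  obtain q where q: "\<forall>i. coeff q i \<in> I" "degree q \<le> n" "poly q w = y"
    using assms by (rule ideal_evalsE)
  define a where "a = coeff q n"
  have "\<forall>i. coeff (q - monom a n) i \<in> I"
    using q(1) submodD(1)[OF I(1)] by (simp add: a_def coeff_monom)
  moreover have "degree (q - monom a n) \<le> n - 1"
  proof (rule degree_le, intro allI impI)
    fix i assume "n - 1 < i"
    then have "i = n \<or> degree q < i"
      using q(2) by linarith
    then show "coeff (q - monom a n) i = 0"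
      by (auto simp: a_def coeff_monom coeff_eq_0)
  qed
  ultimately have "poly (q - monom a n) w \<in> ideal_evals w (n - 1)"
    by (rule ideal_evalsI)
  moreover have "a \<in> V"
    using q(1) I(2) unfolding a_def by blast
  ultimately show thesis
    using that q(3) by (simp add: poly_monom)
qed

lemma inverse_one_minus_mem:
  assumes b: "b \<in> I"
  shows "inverse (1 - b) \<in> V"
proof (rule ccontr)
  define w where "w = 1 - b"
  assume "inverse (1 - b) \<notin> V"
  then obtain q where q: "\<forall>i. coeff q i \<in> I" "poly q (inverse w) = 1"
    using one_eval_outside unfolding w_def by blast
  have wV: "w \<in> V"
    unfolding w_def using b I(2) subringD(2,4)[OF V] by blast
  have w0: "w \<noteq> 0"
    unfolding w_def using b one_notin by auto
  have "w ^ degree q \<in> I"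
    using ideal_evals_reflect[OF q(1) order.refl w0] q(2) ideal_evals_subset[OF wV] by auto
  moreover have "w - 1 \<in> I"
    using submod_diff[OF V I(1) submodD(1)[OF I(1)] b] unfolding w_def by simp
  then have "w ^ degree q - 1 \<in> I"
    using submod_power_diff[OF V I(1) wV subringD(2)[OF V]] by (metis power_one)
  ultimately have "w ^ degree q - (w ^ degree q - 1) \<in> I"
    by (rule submod_diff[OF V I(1)])
  then show False
    using one_notin by simp
qed

lemma power_mem_ideal_evals:
  assumes w: "w \<noteq> 0" and one: "1 \<in> ideal_evals (inverse w) m"
  shows "w ^ m \<in> ideal_evals w (m - 1)"
proof -
  obtain r where r: "\<forall>i. coeff r i \<in> I" "degree r \<le> m" "poly r (inverse w) = 1"
    using one by (rule ideal_evalsE)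
  have "m \<noteq> 0"
    using one one_notin_ideal_evals_0 by metis
  obtain b s where rs: "r = pCons b s"
    by (rule pCons_cases)
  have b: "b \<in> I" and s: "\<forall>i. coeff s i \<in> I"
    using r(1) unfolding rs by (metis coeff_pCons_0, metis coeff_pCons_Suc)
  have "degree s \<le> m - 1"
    using r(2) unfolding rs by (cases "s = 0") auto
  then have "w ^ (m - 1) * poly s (inverse w) \<in> ideal_evals w (m - 1)"
    by (rule ideal_evals_reflect[OF s _ w])
  moreover have "poly s (inverse w) = w * (1 - b)"
    using r(3) w unfolding rs by (simp add: field_simps)
  then have "w ^ (m - 1) * poly s (inverse w) = (1 - b) * w ^ m"
    using \<open>m \<noteq> 0\<close> by (simp add: power_minus_mult[symmetric] mult_ac)
  ultimately have "inverse (1 - b) * ((1 - b) * w ^ m) \<in> ideal_evals w (m - 1)"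
    using ideal_evals_mult[OF inverse_one_minus_mem[OF b]] by simp
  moreover have "1 - b \<noteq> 0"
    using b one_notin by auto
  then have "inverse (1 - b) * ((1 - b) * w ^ m) = w ^ m"
    by (simp add: mult.assoc[symmetric])
  ultimately show ?thesis
    by simp
qed

lemma one_mem_ideal_evals_lower:
  assumes w: "w \<noteq> 0" and n: "1 \<in> ideal_evals w n"
    and m: "1 \<in> ideal_evals (inverse w) m" and "m \<le> n"
  shows "1 \<in> ideal_evals w (n - 1)"
proof -
  have "m \<noteq> 0"
    using m one_notin_ideal_evals_0 by metis
  have "w ^ (n - m) * w ^ m \<in> ideal_evals w (m - 1 + (n - m))"
    using power_mem_ideal_evals[OF w m] by (rule ideal_evals_power)
  then have wn: "w ^ n \<in> ideal_evals w (n - 1)"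
    using \<open>m \<le> n\<close> \<open>m \<noteq> 0\<close> by (simp add: power_add[symmetric])
  obtain a where "a \<in> V" "1 - a * w ^ n \<in> ideal_evals w (n - 1)"
    using n by (rule ideal_evals_drop_top)
  then have "(1 - a * w ^ n) + a * w ^ n \<in> ideal_evals w (n - 1)"
    using ideal_evals_add ideal_evals_mult wn by blast
  then show ?thesis
    by simp
qed

lemma not_one_mem_ideal_evals_both:
  assumes "x \<noteq> 0"
  shows "\<not> (1 \<in> ideal_evals x n \<and> 1 \<in> ideal_evals (inverse x) m)"
proof (induction "n + m" arbitrary: n m rule: less_induct)
  case less
  show ?case
  proof
    assume both: "1 \<in> ideal_evals x n \<and> 1 \<in> ideal_evals (inverse x) m"
    then have "n \<noteq> 0" "m \<noteq> 0"
      using one_notin_ideal_evals_0 by (metis, metis)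
    consider "m \<le> n" | "n \<le> m"
      by linarith
    then show False
    proof cases
      case 1
      then have "1 \<in> ideal_evals x (n - 1)"
        using one_mem_ideal_evals_lower assms both by blast
      then show False
        using less.hyps[of "n - 1" m] both \<open>n \<noteq> 0\<close> by auto
    next
      case 2
      then have "1 \<in> ideal_evals (inverse x) (m - 1)"
        using one_mem_ideal_evals_lower[of "inverse x" m n] assms both by simp
      then show False
        using less.hyps[of n "m - 1"] both \<open>m \<noteq> 0\<close> by auto
    qed
  qed
qed

lemma valuation:
  assumes "x \<noteq> 0"
  shows "x \<in> V \<or> inverse x \<in> V"
proof (rule ccontr)
  assume "\<not> (x \<in> V \<or> inverse x \<in> V)"
  then obtain q r where "\<forall>i. coeff q i \<in> I" "poly q x = 1" "\<forall>i. coeff r i \<in> I" "poly r (inverse x) = 1"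
    using one_eval_outside by meson
  then have "1 \<in> ideal_evals x (degree q)" "1 \<in> ideal_evals (inverse x) (degree r)"
    by (metis ideal_evalsI order.refl)+
  then show False
    using not_one_mem_ideal_evals_both[OF assms] by blast
qed

end

lemma maximal_overring_avoiding_exists:
  assumes D: "subring D" and one: "1 \<notin> rspan D A"
  obtains V where "subring V" "D \<subseteq> V" "1 \<notin> rspan V A"
    "\<And>R. subring R \<Longrightarrow> V \<subseteq> R \<Longrightarrow> 1 \<notin> rspan R A \<Longrightarrow> R = V"
proof -
  define S where "S = {R. subring R \<and> D \<subseteq> R \<and> 1 \<notin> rspan R A}"
  have "\<exists>V\<in>S. \<forall>R\<in>S. V \<subseteq> R \<longrightarrow> R = V"
  proof (rule subset_Zorn_nonempty)
    show "S \<noteq> {}"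
      using D one unfolding S_def by blast
  next
    fix C assume C: "C \<noteq> {}" "subset.chain S C"
    have "subset.chain {R. subring R} C"
      using C(2) unfolding S_def subset_chain_def by blast
    then have "subring (\<Union>C)"
      by (rule subring_Union_chain[OF C(1)])
    moreover have "D \<subseteq> \<Union>C"
      using C unfolding S_def subset_chain_def by blast
    moreover have "1 \<notin> rspan (\<Union>C) A"
    proof
      assume "1 \<in> rspan (\<Union>C) A"
      then obtain R where "R \<in> C" "1 \<in> rspan R A"
        using C by (rule rspan_Union_chain)
      then show False
        using C(2) unfolding S_def subset_chain_def by blast
    qed
    ultimately show "\<Union>C \<in> S"
      unfolding S_def by blast
  qed
  then show thesis
    using that unfolding S_def by (metis (no_types, lifting) mem_Collect_eq order.trans)
qed

lemma valuation_overring_exists: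
  assumes D: "subring D" and I: "ideal_of D I" "1 \<notin> I"
  obtains V where "valuation_overring D V" "1 \<notin> rspan V I"
proof -
  have "rspan D I = I"
    using rspan_idem[OF D] I(1) unfolding ideal_of_def by blast
  then obtain V where Vp: "subring V" "D \<subseteq> V" "1 \<notin> rspan V I"
    and max: "\<And>R. subring R \<Longrightarrow> V \<subseteq> R \<Longrightarrow> 1 \<notin> rspan R I \<Longrightarrow> R = V"
    using maximal_overring_avoiding_exists[OF D, of I] I(2) by metis
  interpret ideal_avoiding_ring V "rspan V I"
  proof
    show "subring V" "submod V (rspan V I)" "1 \<notin> rspan V I"
      using Vp rspan_submod by auto
    show "rspan V I \<subseteq> V"
      using Vp I(1) unfolding ideal_of_def by (intro rspan_least submod_ring) auto
    fix z assume "z \<notin> V"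
    then have "1 \<in> rspan (adjoin V z) I"
      using max[OF subring_adjoin[OF Vp(1)] subset_adjoin[OF Vp(1)]] mem_adjoin[OF Vp(1)] by blast
    then obtain q where "\<forall>i. coeff q i \<in> rspan V I" "poly q z = 1"
      by (rule one_mem_rspan_adjoin[OF Vp(1)])
    then show "\<exists>q. (\<forall>i. coeff q i \<in> rspan V I) \<and> poly q z = 1"
      by blast
  qed
  have "valuation_overring D V"
    unfolding valuation_overring_def overring_def using Vp(1,2) valuation by blast
  then show thesis
    using Vp(3) by (rule that)
qed

lemma valuation_overring_avoiding_ideal:
  assumes D: "subring D" and I: "ideal_of D I" "I \<noteq> D"
  obtains V where "valuation_overring D V" "subring V"
    "\<forall>x. x \<noteq> 0 \<longrightarrow> x \<in> V \<or> inverse x \<in> V" "1 \<notin> rspan V I"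
proof -
  have "1 \<notin> I"
    using ideal_eq_if_one_mem I by blast
  then obtain V where "valuation_overring D V" "1 \<notin> rspan V I"
    by (rule valuation_overring_exists[OF D I(1)])
  then show thesis
    using that unfolding valuation_overring_def overring_def by blast
qed

lemma valuation_common_divisor:
  assumes V: "subring V" and val: "\<forall>x. x \<noteq> 0 \<longrightarrow> x \<in> V \<or> inverse x \<in> V"
    and B: "finite B" "B \<noteq> {}" "0 \<notin> B"
  shows "\<exists>g\<in>B. \<forall>b\<in>B. b / g \<in> V"
  using B
proof (induction B rule: finite_ne_induct)
  case (singleton a)
  then show ?case
    using subringD(2)[OF V] by simp
next
  case (insert a B)
  then obtain g where g: "g \<in> B" "\<forall>b\<in>B. b / g \<in> V" "g \<noteq> 0" and a: "a \<noteq> 0"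
    by auto
  show ?case
  proof (cases "a / g \<in> V")
    case True
    then show ?thesis
      using g by auto
  next
    case False
    moreover have "a / g \<noteq> 0"
      using a g(3) by simp
    ultimately have "g / a \<in> V"
      using val inverse_divide by metis
    moreover have "b / a = (b / g) * (g / a)" for b
      using g(3) by simp
    ultimately have "b / a \<in> V" if "b \<in> B" for b
      using g(2) that subringD(5)[OF V] by metis
    moreover have "a / a \<in> V"
      using a subringD(2)[OF V] by simp
    ultimately show ?thesis
      by blast
  qed
qed

lemma valuation_fg_principal:
  assumes V: "subring V" and val: "\<forall>x. x \<noteq> 0 \<longrightarrow> x \<in> V \<or> inverse x \<in> V"
    and B: "finite B" "\<exists>b\<in>B. b \<noteq> 0"
  obtains g where "g \<in> B" "g \<noteq> 0" "rspan V B = (\<lambda>e. g * e) ` V"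
proof -
  obtain g where g: "g \<in> B" "g \<noteq> 0" "\<forall>b\<in>B - {0}. b / g \<in> V"
    using valuation_common_divisor[OF V val, of "B - {0}"] B by auto
  have "rspan V B \<subseteq> (\<lambda>e. g * e) ` V"
  proof (rule rspan_least[OF submod_principal[OF V]], rule subsetI)
    fix b assume "b \<in> B"
    then have "b / g \<in> V"
      using g(3) subringD(1)[OF V] by (cases "b = 0") auto
    then show "b \<in> (\<lambda>e. g * e) ` V"
      using g(2) by (intro image_eqI[of _ _ "b / g"]) auto
  qed
  moreover have "(\<lambda>e. g * e) ` V \<subseteq> rspan V B"
    using rspan_mult[OF _ g(1)] by (auto simp: mult.commute)
  ultimately show thesis
    using g(1,2) that by blast
qed

lemma valuation_rspan_fg_principal:
  assumes D: "subring D" and V: "valuation_overring D V" and I: "fgsub D I"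
  obtains g where "g \<noteq> 0" "rspan V I = (\<lambda>e. g * e) ` V"
proof -
  have Vp: "subring V" "D \<subseteq> V" "\<forall>x. x \<noteq> 0 \<longrightarrow> x \<in> V \<or> inverse x \<in> V"
    using V unfolding valuation_overring_def overring_def by auto
  obtain A where A: "finite A" "I = rspan D A" "rspan D A \<noteq> {0}"
    using I unfolding fgsub_def by blast
  obtain g where "g \<in> A" "g \<noteq> 0" "rspan V A = (\<lambda>e. g * e) ` V"
    using valuation_fg_principal[OF Vp(1,3) A(1) nonzero_generator_if_rspan_nonzero[OF A(3)]] .
  moreover have "rspan V I = rspan V A"
    unfolding A(2) by (rule rspan_rspan[OF D Vp(1,2)])
  ultimately show thesis
    using that by simp
qed

lemma one_mem_t_op_ring: "subring V \<Longrightarrow> 1 \<in> t_op V V"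
proof -
  assume V: "subring V"
  have "rspan V {1} = V"
    using rspan_overring[OF V, of "{1}"] subringD(2)[OF V] by simp
  moreover have "V \<noteq> {0}"
    using subringD(2)[OF V] by auto
  ultimately have "fgsub V V"
    unfolding fgsub_def by (metis finite.emptyI finite.insertI)
  moreover have "1 \<in> v_op V V"
    unfolding v_op_def colon_def using subringD(2)[OF V] by (simp, metis mult.right_neutral)
  ultimately show ?thesis
    unfolding t_op_def star_f_def by blast
qed

lemma one_mem_if_one_mem_t_op:
  assumes V: "subring V" and val: "\<forall>x. x \<noteq> 0 \<longrightarrow> x \<in> V \<or> inverse x \<in> V"
    and E: "submod V E" and one: "1 \<in> t_op V E"
  shows "1 \<in> E"
proof -
  obtain G where G: "fgsub V G" "G \<subseteq> E" "1 \<in> v_op V G"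
    using one unfolding t_op_def star_f_def by blast
  obtain B where B: "finite B" "G = rspan V B" "G \<noteq> {0}"
    using G(1) unfolding fgsub_def by blast
  have "\<exists>b\<in>B. b \<noteq> 0"
    using B(2,3) by (simp add: nonzero_generator_if_rspan_nonzero)
  then obtain h where h: "h \<in> B" "h \<noteq> 0" "G = (\<lambda>e. h * e) ` V"
    using valuation_fg_principal[OF V val B(1)] B(2) by metis
  have "inverse h \<in> colon V G"
    unfolding colon_def h(3) using h(2) by (auto simp: mult.assoc[symmetric])
  then have "inverse h \<in> V"
    using G(3) unfolding v_op_def colon_def by fastforce
  moreover have "h \<in> E"
    using G(2) h(3) subringD(2)[OF V] by (metis image_eqI mult.right_neutral subsetD)
  ultimately have "inverse h * h \<in> E"
    using submodD(3)[OF E] by blast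
  then show ?thesis
    using h(2) by simp
qed

section \<open>Semistar operations\<close>

lemma semistarD:
  assumes "semistar R st" "nzsub R E"
  shows "nzsub R (st E)" "E \<subseteq> st E" "st (st E) = st E"
    "x \<noteq> 0 \<Longrightarrow> st ((\<lambda>e. x * e) ` E) = (\<lambda>e. x * e) ` st E"
    "nzsub R F \<Longrightarrow> F \<subseteq> E \<Longrightarrow> st F \<subseteq> st E"
  using assms unfolding semistar_def by auto

lemma semistar_d_op: "semistar T (d_op T)"
  unfolding semistar_def d_op_def by simp

definition star_proper_on_fg_ideals :: "'a::field set \<Rightarrow> ('a set \<Rightarrow> 'a set) \<Rightarrow> bool" where
  "star_proper_on_fg_ideals D st \<longleftrightarrow> (\<forall>I. ideal_of D I \<longrightarrow> fgsub D I \<longrightarrow> st I = st D \<longrightarrow> I = D)"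

lemma star_proper_on_fg_idealsI:
  assumes "\<And>I. ideal_of D I \<Longrightarrow> fgsub D I \<Longrightarrow> st I = st D \<Longrightarrow> I \<noteq> D \<Longrightarrow> False"
  shows "star_proper_on_fg_ideals D st"
  using assms unfolding star_proper_on_fg_ideals_def by blast

context
  fixes D :: "'a::field set" and st :: "'a set \<Rightarrow> 'a set"
  assumes D: "subring D" and st: "semistar D st"
begin

lemma star_subset_star_ring: "nzsub D E \<Longrightarrow> E \<subseteq> D \<Longrightarrow> st E \<subseteq> st D"
  by (rule semistarD(5)[OF st nzsub_ring[OF D]])

lemma one_mem_star_ring: "1 \<in> st D"
  using semistarD(2)[OF st nzsub_ring[OF D]] subringD(2)[OF D] by blast

lemma star_eq_star_ring_if_one_mem:
  assumes G: "nzsub D G" "G \<subseteq> D" and one: "1 \<in> st G"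
  shows "st G = st D"
proof
  show "st G \<subseteq> st D"
    using star_subset_star_ring[OF G] .
  have stG: "nzsub D (st G)"
    by (rule semistarD(1)[OF st G(1)])
  have "D \<subseteq> st G"
  proof
    fix d assume "d \<in> D"
    then have "d * 1 \<in> st G"
      using one stG unfolding nzsub_def submod_def by blast
    then show "d \<in> st G" by simp
  qed
  then have "st D \<subseteq> st (st G)"
    by (rule semistarD(5)[OF st stG nzsub_ring[OF D]])
  then show "st D \<subseteq> st G"
    using semistarD(3)[OF st G(1)] by simp
qed

lemma star_subset_star_f: "fgsub D G \<Longrightarrow> G \<subseteq> E \<Longrightarrow> st G \<subseteq> star_f D st E"
  unfolding star_f_def by blast

lemma star_f_subset_star_ring: "E \<subseteq> D \<Longrightarrow> star_f D st E \<subseteq> st D"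
  unfolding star_f_def using star_subset_star_ring fgsub_nzsub[OF D] by blast

lemma subset_star_f:
  assumes E: "nzsub D E"
  shows "E \<subseteq> star_f D st E"
proof
  fix x assume x: "x \<in> E"
  obtain y where y: "y \<in> E" "y \<noteq> 0"
    using E unfolding nzsub_def submod_def by blast
  define G where "G = rspan D {x, y}"
  have "{x, y} \<subseteq> G"
    unfolding G_def by (rule rspan_superset[OF subringD(2)[OF D]])
  then have G: "fgsub D G"
    unfolding G_def using y(2) by (intro fgsub_rspan) auto
  have "G \<subseteq> E"
    unfolding G_def using E x y(1) unfolding nzsub_def by (intro rspan_least) auto
  moreover have "x \<in> st G"
    using semistarD(2)[OF st fgsub_nzsub[OF D G]] \<open>{x, y} \<subseteq> G\<close> by blast
  ultimately show "x \<in> star_f D st E"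
    using star_subset_star_f[OF G] by blast
qed

lemma one_notin_star_f_if_star_proper:
  assumes Q: "star_proper_on_fg_ideals D st" and I: "ideal_of D I" "I \<noteq> D"
  shows "1 \<notin> star_f D st I"
proof
  assume "1 \<in> star_f D st I"
  then obtain G where G: "fgsub D G" "G \<subseteq> I" "1 \<in> st G"
    unfolding star_f_def by blast
  have GD: "G \<subseteq> D"
    using G(2) I(1) unfolding ideal_of_def by blast
  have "st G = st D"
    using star_eq_star_ring_if_one_mem[OF fgsub_nzsub[OF D G(1)] GD G(3)] .
  then have "G = D"
    using Q ideal_of_fgsub[OF D G(1) GD] G(1) unfolding star_proper_on_fg_ideals_def by blast
  then show False
    using G(2) I unfolding ideal_of_def by blast
qed

lemma star_proper_iff_star_subset:
  "(\<forall>I. ideal_of D I \<longrightarrow> fgsub D I \<longrightarrow> I \<noteq> D \<longrightarrow> st I \<subset> st D) \<longleftrightarrow> star_proper_on_fg_ideals D st"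
proof -
  have "st I \<subseteq> st D" if "ideal_of D I" "fgsub D I" for I
    using that star_subset_star_ring fgsub_nzsub[OF D] unfolding ideal_of_def by blast
  then show ?thesis
    unfolding star_proper_on_fg_ideals_def psubset_eq by blast
qed

lemma star_proper_if_star_f_subset:
  assumes "\<And>I. ideal_of D I \<Longrightarrow> fgsub D I \<Longrightarrow> st I = st D \<Longrightarrow> I \<noteq> D \<Longrightarrow> star_f D st I \<subset> st D"
  shows "star_proper_on_fg_ideals D st"
proof (rule star_proper_on_fg_idealsI)
  fix I assume I: "ideal_of D I" "fgsub D I" "st I = st D" "I \<noteq> D"
  have "st I \<subseteq> star_f D st I"
    by (rule star_subset_star_f[OF I(2) order.refl])
  then show False
    using assms[OF I] I(3) by blast
qed

lemma star_proper_iff_star_f_subset: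
  "(\<forall>I. ideal_of D I \<longrightarrow> I \<noteq> {0} \<longrightarrow> I \<noteq> D \<longrightarrow> star_f D st I \<subset> st D) \<longleftrightarrow>
   star_proper_on_fg_ideals D st"
proof
  assume "\<forall>I. ideal_of D I \<longrightarrow> I \<noteq> {0} \<longrightarrow> I \<noteq> D \<longrightarrow> star_f D st I \<subset> st D"
  then show "star_proper_on_fg_ideals D st"
    by (intro star_proper_if_star_f_subset) (auto simp: fgsub_def)
next
  assume Q: "star_proper_on_fg_ideals D st"
  show "\<forall>I. ideal_of D I \<longrightarrow> I \<noteq> {0} \<longrightarrow> I \<noteq> D \<longrightarrow> star_f D st I \<subset> st D"
    using one_notin_star_f_if_star_proper[OF Q] star_f_subset_star_ring one_mem_star_ring
    unfolding ideal_of_def by blast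
qed

lemma star_proper_iff_star_f_invertible_subset:
  "(\<forall>I. ideal_of D I \<longrightarrow> I \<noteq> {0} \<longrightarrow> I \<noteq> D \<longrightarrow>
      star_f D st (mprod D I (colon D I)) = st D \<longrightarrow> star_f D st I \<subset> st D) \<longleftrightarrow>
   star_proper_on_fg_ideals D st"
proof
  assume P: "\<forall>I. ideal_of D I \<longrightarrow> I \<noteq> {0} \<longrightarrow> I \<noteq> D \<longrightarrow>
      star_f D st (mprod D I (colon D I)) = st D \<longrightarrow> star_f D st I \<subset> st D"
  show "star_proper_on_fg_ideals D st"
  proof (rule star_proper_if_star_f_subset)
    fix I assume I: "ideal_of D I" "fgsub D I" "st I = st D" "I \<noteq> D"
    have "I \<subseteq> D"
      using I(1) unfolding ideal_of_def by blast
    then have "star_f D st (mprod D I (colon D I)) = st D"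
      using star_f_subset_star_ring[OF mprod_colon_subset[OF D]]
        star_subset_star_f[OF I(2) subset_mprod_colon[OF D]] I(3) by blast
    then show "star_f D st I \<subset> st D"
      using P I unfolding fgsub_def by blast
  qed
next
  assume "star_proper_on_fg_ideals D st"
  then show "\<forall>I. ideal_of D I \<longrightarrow> I \<noteq> {0} \<longrightarrow> I \<noteq> D \<longrightarrow>
      star_f D st (mprod D I (colon D I)) = st D \<longrightarrow> star_f D st I \<subset> st D"
    using star_proper_iff_star_f_subset by blast
qed

lemma linked_if_star_proper:
  assumes Q: "star_proper_on_fg_ideals D st" and T: "overring D T"
  shows "linked D st T st'"
  unfolding linked_def
proof (intro allI impI)
  fix F assume "fgsub D F" "F \<subseteq> D" "st F = st D"
  then have "F = D"
    using Q ideal_of_fgsub[OF D] unfolding star_proper_on_fg_ideals_def by blast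
  moreover have "rspan T D = T"
    using T subringD(2)[OF D] rspan_overring unfolding overring_def by blast
  ultimately show "st' (rspan T F) = st' T"
    by simp
qed

lemma star_proper_if_linked_d_op:
  assumes "linked D st D (d_op D)"
  shows "star_proper_on_fg_ideals D st"
  unfolding star_proper_on_fg_ideals_def
proof (intro allI impI)
  fix I assume I: "ideal_of D I" "fgsub D I" "st I = st D"
  then have "rspan D I = D"
    using assms unfolding linked_def d_op_def ideal_of_def by blast
  then show "I = D"
    using rspan_idem[OF D fgsub_submod[OF D I(2)]] by simp
qed


lemma one_mem_star_f_maximal_ideal:
  assumes M: "maximal_ideal D M" and x: "x \<in> D" "x \<notin> M" "x \<in> star_f D st M"
  shows "1 \<in> star_f D st M"
proof -
  have Ms: "submod D M"
    using M unfolding maximal_ideal_def ideal_of_def by auto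
  obtain G where G: "fgsub D G" "G \<subseteq> M" "x \<in> st G"
    using x(3) unfolding star_f_def by blast
  obtain m d where md: "m \<in> M" "d \<in> D" "1 = m + d * x"
    by (rule maximal_ideal_comaximal[OF D M x(1,2)])
  obtain B where B: "finite B" "G = rspan D B"
    using G(1) unfolding fgsub_def by blast
  define G' where "G' = rspan D (insert m B)"
  have GG': "G \<subseteq> G'"
    unfolding B(2) G'_def by (rule rspan_mono) auto
  have G'M: "G' \<subseteq> M"
    unfolding G'_def using Ms md(1) G(2) rspan_superset[OF subringD(2)[OF D], of B]
    by (intro rspan_least) (auto simp: B(2))
  have "G' \<noteq> {0}"
    using GG' G(1) submodD(1)[OF fgsub_submod[OF D G(1)]] unfolding fgsub_def by blast
  then have G': "fgsub D G'"
    unfolding G'_def using B(1) by (intro fgsub_rspan) auto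
  have stG': "submod D (st G')"
    using semistarD(1)[OF st fgsub_nzsub[OF D G']] unfolding nzsub_def by blast
  have "x \<in> st G'"
    using G(3) semistarD(5)[OF st fgsub_nzsub[OF D G'] fgsub_nzsub[OF D G(1)] GG'] by blast
  moreover have "m \<in> st G'"
    using semistarD(2)[OF st fgsub_nzsub[OF D G']] rspan_superset[OF subringD(2)[OF D]]
    unfolding G'_def by blast
  ultimately have "1 \<in> st G'"
    using md(2,3) submodD[OF stG'] by metis
  then show ?thesis
    using star_subset_star_f[OF G' G'M] by blast
qed

lemma quasi_maximal_if_star_proper:
  assumes Q: "star_proper_on_fg_ideals D st"
    and K: "quotient_field_is_UNIV D" "D \<noteq> UNIV" and M: "maximal_ideal D M"
  shows "quasi_maximal D (star_f D st) M"
proof -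
  have Mi: "ideal_of D M" "M \<noteq> D" and Ms: "submod D M" "M \<subseteq> D"
    using M unfolding maximal_ideal_def ideal_of_def by auto
  have M0: "M \<noteq> {0}"
    by (rule maximal_ideal_nonzero[OF D K M])
  have "star_f D st M \<inter> D \<subseteq> M"
    using one_mem_star_f_maximal_ideal[OF M] one_notin_star_f_if_star_proper[OF Q Mi] by blast
  moreover have "M \<subseteq> star_f D st M"
    using subset_star_f M0 Ms(1) unfolding nzsub_def by blast
  ultimately have "quasi_ideal D (star_f D st) M"
    unfolding quasi_ideal_def using Mi(1) M0 Ms(2) by blast
  then show ?thesis
    using M unfolding quasi_maximal_def maximal_ideal_def quasi_ideal_def by blast
qed

lemma star_proper_if_maximal_quasi_maximal:
  assumes P: "\<forall>M. maximal_ideal D M \<longrightarrow> quasi_maximal D (star_f D st) M"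
  shows "star_proper_on_fg_ideals D st"
proof (rule star_proper_on_fg_idealsI)
  fix I assume I: "ideal_of D I" "fgsub D I" "st I = st D" "I \<noteq> D"
  then have "1 \<notin> I"
    using ideal_eq_if_one_mem by blast
  then obtain M where M: "maximal_ideal D M" "I \<subseteq> M"
    by (rule maximal_ideal_exists[OF D I(1)])
  have "1 \<in> star_f D st M"
    using star_subset_star_f[OF I(2) M(2)] I(3) one_mem_star_ring by blast
  moreover have "star_f D st M \<inter> D = M"
    using P M(1) unfolding quasi_maximal_def quasi_ideal_def by blast
  ultimately have "1 \<in> M"
    using subringD(2)[OF D] by blast
  then show False
    using M(1) ideal_eq_if_one_mem unfolding maximal_ideal_def by blast
qed


lemma star_proper_iff_maximal_quasi_maximal:
  assumes "quotient_field_is_UNIV D" "D \<noteq> UNIV"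
  shows "(\<forall>M. maximal_ideal D M \<longrightarrow> quasi_maximal D (star_f D st) M) \<longleftrightarrow>
    star_proper_on_fg_ideals D st"
  using quasi_maximal_if_star_proper[OF _ assms] star_proper_if_maximal_quasi_maximal by blast

lemma star_proper_iff_linked:
  "(\<forall>T st'. overring D T \<longrightarrow> semistar T st' \<longrightarrow> linked D st T st') \<longleftrightarrow>
   star_proper_on_fg_ideals D st"
  using linked_if_star_proper star_proper_if_linked_d_op semistar_d_op D
  unfolding overring_def by blast

lemma star_proper_iff_linked_d_op:
  "(\<forall>T. overring D T \<longrightarrow> linked D st T (d_op T)) \<longleftrightarrow> star_proper_on_fg_ideals D st"
  using linked_if_star_proper star_proper_if_linked_d_op D unfolding overring_def by blast

lemma star_proper_iff_linked_t_op:
  "(\<forall>T. overring D T \<longrightarrow> linked D st T (t_op T)) \<longleftrightarrow> star_proper_on_fg_ideals D st"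
proof
  assume P: "\<forall>T. overring D T \<longrightarrow> linked D st T (t_op T)"
  show "star_proper_on_fg_ideals D st"
  proof (rule star_proper_on_fg_idealsI)
    fix I assume I: "ideal_of D I" "fgsub D I" "st I = st D" "I \<noteq> D"
    obtain V where V: "valuation_overring D V" "subring V"
      "\<forall>x. x \<noteq> 0 \<longrightarrow> x \<in> V \<or> inverse x \<in> V" "1 \<notin> rspan V I"
      by (rule valuation_overring_avoiding_ideal[OF D I(1,4)])
    have "t_op V (rspan V I) = t_op V V"
      using P V(1) I unfolding valuation_overring_def linked_def ideal_of_def by blast
    then have "1 \<in> t_op V (rspan V I)"
      using one_mem_t_op_ring[OF V(2)] by simp
    then have "1 \<in> rspan V I"
      by (rule one_mem_if_one_mem_t_op[OF V(2,3) rspan_submod[OF V(2)]])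
    then show False
      using V(4) by blast
  qed
qed (use linked_if_star_proper in blast)

lemma star_proper_iff_linked_valuation:
  "(\<forall>V. valuation_overring D V \<longrightarrow> (\<exists>st'. semistar V st' \<and> st' V = V \<and> linked D st V st')) \<longleftrightarrow>
   star_proper_on_fg_ideals D st"
proof
  assume P: "\<forall>V. valuation_overring D V \<longrightarrow> (\<exists>st'. semistar V st' \<and> st' V = V \<and> linked D st V st')"
  show "star_proper_on_fg_ideals D st"
  proof (rule star_proper_on_fg_idealsI)
    fix I assume I: "ideal_of D I" "fgsub D I" "st I = st D" "I \<noteq> D"
    obtain V where V: "valuation_overring D V" "subring V"
      "\<forall>x. x \<noteq> 0 \<longrightarrow> x \<in> V \<or> inverse x \<in> V" "1 \<notin> rspan V I"
      by (rule valuation_overring_avoiding_ideal[OF D I(1,4)])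
    obtain st' where st': "semistar V st'" "st' V = V" "linked D st V st'"
      using P V(1) by blast
    obtain g where g: "g \<noteq> 0" "rspan V I = (\<lambda>e. g * e) ` V"
      by (rule valuation_rspan_fg_principal[OF D V(1) I(2)])
    have "st' (rspan V I) = V"
      using st'(2,3) I unfolding linked_def ideal_of_def by blast
    moreover have "st' (rspan V I) = rspan V I"
      unfolding g(2) semistarD(4)[OF st'(1) nzsub_ring[OF V(2)] g(1)] st'(2) ..
    ultimately have "1 \<in> rspan V I"
      using subringD(2)[OF V(2)] by simp
    then show False
      using V(4) by blast
  qed
next
  assume "star_proper_on_fg_ideals D st"
  then show "\<forall>V. valuation_overring D V \<longrightarrow> (\<exists>st'. semistar V st' \<and> st' V = V \<and> linked D st V st')"
    using linked_if_star_proper semistar_d_op unfolding valuation_overring_def d_op_def by metis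
qed

end

lemma tfae_if_all_eq: "(\<forall>p\<in>set ps. p = q) \<Longrightarrow> tfae ps"
  unfolding tfae_def by (metis nth_mem)

theorem theorem3p9:
  fixes D :: "'a::field set" and st :: "'a set \<Rightarrow> 'a set"
  assumes "subring D" and "quotient_field_is_UNIV D" and "D \<noteq> UNIV"
    and "semistar D st"
  shows
   "tfae [(\<forall>T st'. overring D T \<longrightarrow> semistar T st' \<longrightarrow> linked D st T st'),
     (\<forall>T. overring D T \<longrightarrow> linked D st T (d_op T)),
     (\<forall>T. overring D T \<longrightarrow> linked D st T (t_op T)),
     (\<forall>V. valuation_overring D V \<longrightarrow>
          (\<exists>st'. semistar V st' \<and> st' V = V \<and> linked D st V st')),
     (\<forall>M. maximal_ideal D M \<longrightarrow> quasi_maximal D (star_f D st) M),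
     (\<forall>I. ideal_of D I \<longrightarrow> I \<noteq> {0} \<longrightarrow> I \<noteq> D \<longrightarrow> star_f D st I \<subset> st D),
     (\<forall>I. ideal_of D I \<longrightarrow> fgsub D I \<longrightarrow> I \<noteq> D \<longrightarrow> st I \<subset> st D),
     (\<forall>I. ideal_of D I \<longrightarrow> I \<noteq> {0} \<longrightarrow> I \<noteq> D \<longrightarrow>
          star_f D st (mprod D I (colon D I)) = st D \<longrightarrow> star_f D st I \<subset> st D)]"
  unfolding star_proper_iff_linked[OF assms(1,4)] star_proper_iff_linked_d_op[OF assms(1,4)]
    star_proper_iff_linked_t_op[OF assms(1,4)] star_proper_iff_linked_valuation[OF assms(1,4)]
    star_proper_iff_maximal_quasi_maximal[OF assms(1,4,2,3)]
    star_proper_iff_star_f_subset[OF assms(1,4)] star_proper_iff_star_subset[OF assms(1,4)]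
    star_proper_iff_star_f_invertible_subset[OF assms(1,4)]
  by (rule tfae_if_all_eq[where q = "star_proper_on_fg_ideals D st"]) simp

end
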